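(* Let $r\geqslant 2$, $\ell\geqslant 1$ and $m=2^r(2^\ell+1)$. Then: (i) $L_1(x^{m-1})=x^{2^r-1}+\left(1+\sum_{k=r}^{r+\ell-1}x^{2^k}\right)\sum_{k=0}^{r-1}x^{2^k-1}$; (ii) $x^2\,(L_1(x^{m-1}))'=P_r(x)^2+P_\ell(x)^{2^r}P_{r-1}(x)^2$; (iii) if $\tau$ is a root of $(L_1(x^{m-1}))'$ in $\overline{\mathbb F}_2$, then $P_{r-1}(\tau)\neq 0$; (iv) if $\tau_i,\tau_j$ are distinct roots of $(L_1(x^{m-1}))'$ with $P_\ell(\tau_i+\tau_j)=0$, then $P_{r-1}(\tau_i+\tau_j)\neq 0$ and $$P_\ell(\tau_i)^{2^{r-1}}=\frac{P_r(\tau_i)}{P_{r-1}(\tau_i)}=\frac{P_r(\tau_i+\tau_j)}{P_{r-1}(\tau_i+\tau_j)}=\frac{P_r(\tau_j)}{P_{r-1}(\tau_j)}=P_\ell(\tau_j)^{2^{r-1}}.$$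
   Context: Here $P_0=0$ and, for $k\geqslant 1$, $P_k(x)=x+x^2+\dots+x^{2^{k-1}}$ is the $k$-th trace polynomial over $\mathbb F_2$. For $m\equiv 0\pmod 4$, $L_1(x^{m-1})$ denotes the unique polynomial $Q$ of degree at most $(m-2)/2$ over $\mathbb F_2$ with $Q(x(x+1))=(x+1)^{m-1}+x^{m-1}$. *)

theory Defs
  imports "HOL-Library.Z2" "HOL-Computational_Algebra.Polynomial" "HOL-Algebra.Algebraic_Closure_Type"
begin

definition trP :: "nat \<Rightarrow> 'a::comm_semiring_1 poly" where
  "trP k = (\<Sum>i<k. monom 1 (2 ^ i))"

text \<open>L_1(x^(m-1)) over F_2: the unique Q with deg Q <= (m-2)/2 and
  Q(x(x+1)) = (x+1)^(m-1) + x^(m-1).\<close>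
definition L1 :: "nat \<Rightarrow> bit poly" where
  "L1 m = (THE Q. degree Q \<le> (m - 2) div 2 \<and>
     pcompose Q [:0, 1, 1:] = [:1, 1:] ^ (m - 1) + [:0, 1:] ^ (m - 1))"

end

theory Submission
  imports Defs
begin

(*
  Everything happens in characteristic 2, where x \<mapsto> x ^ 2 ^ k is additive.
  (i) Write Q = L1 m and Y = x(x + 1).  Then Y ^ 2 ^ k = x ^ 2 ^ k + x ^ 2 ^ (k + 1), so after
  multiplying Q(Y) by Y both sums in the closed form telescope; comparing with
  Y((x + 1) ^ (m - 1) + x ^ (m - 1)) is then a ring identity modulo 2, and Q is unique since
  composing with the non-constant Y is injective.
  (ii) Differentiation kills the even exponents and only the odd exponents 2 ^ k - 1 survive.
  (iii) At a root t of Q', (ii) reads P_r(t)^2 = (P_l(t) ^ 2 ^ (r - 1) * P_(r-1)(t))^2.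
  If P_(r-1)(t) = 0 then P_r(t) = 0 too, so t = 0; but Q'(0) = 1.  Taking square roots gives
  P_l(t) ^ 2 ^ (r - 1) = P_r(t) / P_(r-1)(t).
  (iv) P_l(ti + tj) = 0 gives P_l(ti) = P_l(tj), so P_r = q P_(r-1) at ti and tj for a common q,
  hence by additivity also at ti + tj; there P_(r-1) cannot vanish, since ti + tj \<noteq> 0.
*)

lemma CHAR_bit [simp]: "CHAR(bit) = 2"
  by (rule CHAR_eq_posI) (auto simp: less_2_cases_iff)

lemma two_eq_zero_CHAR_2: "CHAR('a::semiring_1) = 2 \<Longrightarrow> (2::'a) = 0"
  using of_nat_CHAR[where ?'a='a] by simp

lemma add_self_CHAR_2:
  fixes x :: "'a::semiring_1" assumes "CHAR('a) = 2" shows "x + x = 0"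
  using two_eq_zero_CHAR_2[OF assms] by (simp flip: mult_2)

lemma add_eq_0_iff_eq_CHAR_2:
  fixes x y :: "'a::ring_1" assumes "CHAR('a) = 2" shows "x + y = 0 \<longleftrightarrow> x = y"
  by (metis add_eq_0_iff2 uminus_CHAR_2[OF assms])

lemma of_nat_CHAR_2:
  assumes "CHAR('a::semiring_1) = 2" shows "(of_nat n :: 'a) = (if even n then 0 else 1)"
proof -
  have "(of_nat (2 * (n div 2)) :: 'a) = 0"
    using of_nat_CHAR[where ?'a='a] assms by (simp only: of_nat_mult) simp
  then show ?thesis
    by (metis (no_types) add_0 mod2_eq_if of_nat_0 of_nat_1 of_nat_add div_mult_mod_eq mult.commute)
qed

lemma power_2_power_add_CHAR_2:
  fixes x y :: "'a::comm_semiring_1" assumes "CHAR('a) = 2"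
  shows "(x + y) ^ 2 ^ k = x ^ 2 ^ k + y ^ 2 ^ k"
  by (rule freshmans_dream') (simp_all add: assms)

lemma sum_power_2_power_CHAR_2:
  fixes f :: "'b \<Rightarrow> 'a::comm_semiring_1" assumes "CHAR('a) = 2"
  shows "sum f A ^ 2 ^ k = (\<Sum>i\<in>A. f i ^ 2 ^ k)"
  by (rule freshmans_dream_sum') (simp_all add: assms)

lemma power_2_power_eq_iff_CHAR_2:
  fixes x y :: "'a::idom" assumes "CHAR('a) = 2"
  shows "x ^ 2 ^ k = y ^ 2 ^ k \<longleftrightarrow> x = y"
proof
  assume "x ^ 2 ^ k = y ^ 2 ^ k"
  then have "(x + y) ^ 2 ^ k = 0"
    by (simp add: power_2_power_add_CHAR_2 add_self_CHAR_2 assms)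
  then show "x = y"
    by (simp add: add_eq_0_iff_eq_CHAR_2 assms)
qed simp

lemma trP_0 [simp]: "trP 0 = 0"
  by (simp add: trP_def)

lemma trP_Suc: "trP (Suc k) = trP k + monom 1 (2 ^ k)"
  by (simp add: trP_def)

lemma poly_trP: "poly (trP k) t = (\<Sum>i<k. t ^ 2 ^ i)"
  by (simp add: trP_def poly_sum poly_monom)

lemma poly_trP_add:
  fixes x y :: "'a::comm_semiring_1" assumes "CHAR('a) = 2"
  shows "poly (trP k) (x + y) = poly (trP k) x + poly (trP k) y"
  by (simp add: poly_trP power_2_power_add_CHAR_2[OF assms] sum.distrib)

lemma trP_power_2_power:
  assumes "CHAR('a::comm_semiring_1) = 2"
  shows "(trP k :: 'a poly) ^ 2 ^ j = (\<Sum>i<k. monom 1 (2 ^ (i + j)))"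
  by (simp add: trP_def sum_power_2_power_CHAR_2 assms monom_power power_add)

lemma poly_trP_consecutive_zeros:
  fixes t :: "'a::idom"
  assumes "poly (trP k) t = 0" and "poly (trP (Suc k)) t = 0"
  shows "t = 0"
  using assms by (simp add: trP_Suc poly_monom)

lemma map_poly_to_ac_add:
  "map_poly to_ac (p + q) = map_poly to_ac p + map_poly (to_ac :: 'a::field \<Rightarrow> _) q"
  by (rule poly_eqI) (simp add: coeff_map_poly)

lemma map_poly_to_ac_mult:
  "map_poly to_ac (p * q) = map_poly to_ac p * map_poly (to_ac :: 'a::field \<Rightarrow> _) q"
  by (rule poly_eqI) (simp add: coeff_map_poly coeff_mult to_ac_sum)

lemma map_poly_to_ac_power: "map_poly to_ac (p ^ n) = map_poly (to_ac :: 'a::field \<Rightarrow> _) p ^ n"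
  by (induction n) (simp_all add: map_poly_to_ac_mult)

lemma map_poly_to_ac_trP: "map_poly (to_ac :: 'a::field \<Rightarrow> _) (trP k) = trP k"
  by (induction k) (simp_all add: trP_Suc map_poly_to_ac_add map_poly_monom)

definition L1_closed_form :: "nat \<Rightarrow> nat \<Rightarrow> 'a::comm_semiring_1 poly" where
  "L1_closed_form r l = monom 1 (2 ^ r - 1) +
     (1 + (\<Sum>k\<in>{r..<r + l}. monom 1 (2 ^ k))) * (\<Sum>k<r. monom 1 (2 ^ k - 1))"

lemma pcompose_monom_1: "pcompose (monom 1 n) q = q ^ n"
  by (induction n) (simp_all add: monom_Suc pcompose_pCons pcompose_1)

lemma power_2_power_X_plus_X2:
  assumes "CHAR('a::comm_semiring_1) = 2"
  shows "[:0, 1, 1:] ^ 2 ^ k = [:0, 1:] ^ 2 ^ k + ([:0, 1:] :: 'a poly) ^ 2 ^ Suc k"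
proof -
  have "[:0, 1, 1:] = [:0, 1:] + ([:0, 1:] :: 'a poly) ^ 2"
    by (simp add: power2_eq_square)
  then show ?thesis
    by (simp add: power_2_power_add_CHAR_2 assms flip: power_mult)
qed

lemma sum_telescope_CHAR_2:
  fixes f :: "nat \<Rightarrow> 'a::ring_1" assumes "CHAR('a) = 2" and "m \<le> n"
  shows "(\<Sum>k = m..<n. f k + f (Suc k)) = f m + f n"
  using sum_Suc_diff'[OF assms(2), of f] by (simp add: minus_CHAR_2[OF assms(1)] add.commute)

lemma X_plus_X2_mult_pcompose_L1_closed_form:
  assumes "CHAR('a::comm_ring_1) = 2"
  defines "x \<equiv> [:0, 1:] :: 'a poly"
  shows "[:0, 1, 1:] * pcompose (L1_closed_form r l) [:0, 1, 1:] =
    x ^ 2 ^ r + (x ^ 2 ^ r) ^ 2 + (1 + x ^ 2 ^ r + x ^ 2 ^ (r + l)) * (x + x ^ 2 ^ r)"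
proof -
  define y :: "'a poly" where "y = [:0, 1, 1:]"
  have char: "CHAR('a poly) = 2"
    using assms(1) by simp
  have y_pow: "y ^ 2 ^ k = x ^ 2 ^ k + x ^ 2 ^ Suc k" for k
    unfolding x_def y_def by (rule power_2_power_X_plus_X2[OF assms(1)])
  have y_mult_pow: "y * y ^ (n - 1) = y ^ n" if "n > 0" for n
    using that by (simp flip: power_Suc)
  have "y * (\<Sum>k<r. y ^ (2 ^ k - 1)) = (\<Sum>k = 0..<r. y ^ 2 ^ k)"
    unfolding sum_distrib_left atLeast0LessThan by (intro sum.cong refl y_mult_pow) simp
  also have "\<dots> = x ^ 2 ^ 0 + x ^ 2 ^ r"
    unfolding y_pow by (rule sum_telescope_CHAR_2[OF char, where f = "\<lambda>k. x ^ 2 ^ k"]) simp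
  finally have low: "y * (\<Sum>k<r. y ^ (2 ^ k - 1)) = x + x ^ 2 ^ r"
    by simp
  have high: "(\<Sum>k = r..<r + l. y ^ 2 ^ k) = x ^ 2 ^ r + x ^ 2 ^ (r + l)"
    unfolding y_pow by (rule sum_telescope_CHAR_2[OF char, where f = "\<lambda>k. x ^ 2 ^ k"]) simp
  have top: "y * y ^ (2 ^ r - 1) = x ^ 2 ^ r + (x ^ 2 ^ r) ^ 2"
    using y_mult_pow[of "2 ^ r"] y_pow[of r] by (simp add: mult.commute flip: power_mult)
  have "y * pcompose (L1_closed_form r l) y =
      y * y ^ (2 ^ r - 1) + (1 + (\<Sum>k = r..<r + l. y ^ 2 ^ k)) * (y * (\<Sum>k<r. y ^ (2 ^ k - 1)))"
    by (simp add: L1_closed_form_def pcompose_add pcompose_mult pcompose_sum pcompose_monom_1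
        pcompose_1 algebra_simps)
  also have "\<dots> = x ^ 2 ^ r + (x ^ 2 ^ r) ^ 2 + (1 + x ^ 2 ^ r + x ^ 2 ^ (r + l)) * (x + x ^ 2 ^ r)"
    by (simp only: low high top add.assoc)
  finally show ?thesis
    unfolding y_def .
qed

lemma X_plus_X2_mult_binomial_sum:
  assumes "m > 0"
  shows "[:0, 1, 1:] * ([:1, 1:] ^ (m - 1) + [:0, 1:] ^ (m - 1)) =
    [:0, 1:] * [:1, 1:] ^ m + [:1, 1:] * ([:0, 1:] :: 'a::comm_semiring_1 poly) ^ m"
proof -
  have factor: "[:0, 1, 1:] = [:0, 1:] * ([:1, 1:] :: 'a poly)"
    by simp
  have "p * q * (q ^ (m - 1) + p ^ (m - 1)) = p * q ^ m + q * p ^ m" for p q :: "'a poly"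
    using assms by (cases m) (simp_all add: algebra_simps)
  then show ?thesis
    unfolding factor .
qed

lemma pcompose_L1_closed_form:
  fixes r l :: nat
  assumes "CHAR('a::idom) = 2"
  defines "m \<equiv> 2 ^ r * (2 ^ l + 1)"
  shows "pcompose (L1_closed_form r l) [:0, 1, 1:] = [:1, 1:] ^ (m - 1) + ([:0, 1:] :: 'a poly) ^ (m - 1)"
proof -
  define x :: "'a poly" where "x = [:0, 1:]"
  define a b where "a = x ^ 2 ^ r" and "b = x ^ 2 ^ (r + l)"
  have char: "CHAR('a poly) = 2"
    using assms(1) by simp
  have "[:1, 1:] = x + 1" and m: "m = 2 ^ (r + l) + 2 ^ r"
    by (simp_all add: x_def one_pCons m_def power_add algebra_simps)
  moreover have "(x + 1) ^ 2 ^ r = a + 1" "(x + 1) ^ 2 ^ (r + l) = b + 1"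
    by (simp_all add: a_def b_def power_2_power_add_CHAR_2[OF char])
  ultimately have "x * [:1, 1:] ^ m + [:1, 1:] * x ^ m = x * ((b + 1) * (a + 1)) + (x + 1) * (b * a)"
    by (simp add: a_def b_def power_add[of _ "2 ^ (r + l)" "2 ^ r"])
  \<comment> \<open>both sides expand to this common value plus a multiple of 2\<close>
  also have "\<dots> = x + x * a + x * b + a * b"
    using two_eq_zero_CHAR_2[OF char] by (simp add: algebra_simps mult_2)
  also have "\<dots> = a + a ^ 2 + (1 + a + b) * (x + a)"
    using two_eq_zero_CHAR_2[OF char] by (simp add: algebra_simps power2_eq_square mult_2)
  finally have "[:0, 1, 1:] * pcompose (L1_closed_form r l) [:0, 1, 1:] =
      [:0, 1, 1:] * ([:1, 1:] ^ (m - 1) + x ^ (m - 1))"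
    using X_plus_X2_mult_pcompose_L1_closed_form[OF assms(1), of r l]
      X_plus_X2_mult_binomial_sum[of m, where 'a = 'a]
    by (simp add: a_def b_def x_def m_def)
  then show ?thesis
    unfolding x_def by (rule mult_left_cancel[THEN iffD1, rotated]) simp
qed

lemma degree_L1_closed_form:
  assumes "r \<ge> 1"
  shows "degree (L1_closed_form r l :: 'a::comm_semiring_1 poly) \<le> (2 ^ r * (2 ^ l + 1) - 2) div 2"
proof -
  obtain s where r: "r = Suc s"
    using assms by (cases r) auto
  have bound: "(2 ^ r * (2 ^ l + 1) - 2) div 2 = 2 ^ s * 2 ^ l + (2 ^ s - 1 :: nat)"
    by (simp add: r algebra_simps)
  have "(2::nat) ^ s \<le> 2 ^ s * 2 ^ l"
    by simp
  then have "(2::nat) ^ r - 1 \<le> 2 ^ s * 2 ^ l + (2 ^ s - 1)"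
    unfolding r power_Suc by linarith
  then have deg_monom: "degree (monom (1::'a) (2 ^ r - 1)) \<le> 2 ^ s * 2 ^ l + (2 ^ s - 1)"
    using degree_monom_le order.trans by blast
  have deg_high: "degree (1 + (\<Sum>k = r..<r + l. monom (1::'a) (2 ^ k))) \<le> 2 ^ s * 2 ^ l"
  proof (intro degree_add_le degree_sum_le)
    fix k assume "k \<in> {r..<r + l}"
    then have "(2::nat) ^ k \<le> 2 ^ (s + l)"
      by (intro power_increasing) (simp_all add: r)
    then show "degree (monom (1::'a) (2 ^ k)) \<le> 2 ^ s * 2 ^ l"
      by (simp add: degree_monom_eq power_add)
  qed simp_all
  have deg_low: "degree (\<Sum>k<r. monom (1::'a) (2 ^ k - 1)) \<le> 2 ^ s - 1"
  proof (intro degree_sum_le)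
    fix k assume "k \<in> {..<r}"
    then have "(2::nat) ^ k \<le> 2 ^ s"
      by (intro power_increasing) (simp_all add: r)
    then show "degree (monom (1::'a) (2 ^ k - 1)) \<le> 2 ^ s - 1"
      using degree_monom_le[of "1::'a" "2 ^ k - 1"] by linarith
  qed simp
  have "degree ((1 + (\<Sum>k = r..<r + l. monom (1::'a) (2 ^ k))) * (\<Sum>k<r. monom 1 (2 ^ k - 1)))
      \<le> 2 ^ s * 2 ^ l + (2 ^ s - 1)"
    using degree_mult_le deg_high deg_low by (rule order.trans[OF _ add_mono])
  with deg_monom show ?thesis
    unfolding L1_closed_form_def bound by (rule degree_add_le)
qed

lemma L1_eq_closed_form:
  assumes "r \<ge> 1"
  shows "L1 (2 ^ r * (2 ^ l + 1)) = L1_closed_form r l"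
proof -
  have comp: "pcompose (L1_closed_form r l) [:0, 1, 1:] =
      [:1, 1:] ^ (2 ^ r * (2 ^ l + 1) - 1) + ([:0, 1:] :: bit poly) ^ (2 ^ r * (2 ^ l + 1) - 1)"
    by (rule pcompose_L1_closed_form) simp
  show ?thesis
    unfolding L1_def
  proof (rule the_equality)
    fix Q :: "bit poly"
    assume "degree Q \<le> (2 ^ r * (2 ^ l + 1) - 2) div 2 \<and>
        pcompose Q [:0, 1, 1:] = [:1, 1:] ^ (2 ^ r * (2 ^ l + 1) - 1) + [:0, 1:] ^ (2 ^ r * (2 ^ l + 1) - 1)"
    then have "pcompose (Q - L1_closed_form r l) [:0, 1, 1:] = 0"
      using comp by (simp add: pcompose_diff)
    then show "Q = L1_closed_form r l"
      by (simp add: pcompose_eq_0_iff)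
  qed (use comp degree_L1_closed_form[OF assms] in simp)
qed

lemma pderiv_sum: "pderiv (sum f A) = (\<Sum>x\<in>A. pderiv (f x))"
  using higher_pderiv_sum[of 1 f A] by simp

lemma pderiv_monom_1_CHAR_2:
  assumes "CHAR('a::idom) = 2"
  shows "pderiv (monom (1::'a) n) = (if even n then 0 else monom 1 (n - 1))"
  by (simp add: pderiv_monom of_nat_CHAR_2[OF assms])

lemma pderiv_L1_closed_form:
  assumes "CHAR('a::idom) = 2" and "r = Suc s"
  shows "pderiv (L1_closed_form r l :: 'a poly) =
    monom 1 (2 ^ r - 2) + (1 + (\<Sum>k = r..<r + l. monom 1 (2 ^ k))) * (\<Sum>k<s. monom 1 (2 ^ Suc k - 2))"
proof -
  have "pderiv (1 + (\<Sum>k = r..<r + l. monom (1::'a) (2 ^ k))) = 0"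
    using assms by (simp add: pderiv_add pderiv_sum pderiv_monom_1_CHAR_2)
  moreover have "pderiv (\<Sum>k<r. monom (1::'a) (2 ^ k - 1)) = (\<Sum>k<s. monom 1 (2 ^ Suc k - 2))"
  proof -
    have "pderiv (\<Sum>k<r. monom (1::'a) (2 ^ k - 1)) =
        (\<Sum>k<r. if k = 0 then 0 else monom 1 (2 ^ k - 2))"
      unfolding pderiv_sum
      by (intro sum.cong refl) (simp add: pderiv_monom_1_CHAR_2 assms(1), simp add: numeral_2_eq_2)
    then show ?thesis
      unfolding assms(2) sum.lessThan_Suc_shift by simp
  qed
  moreover have "pderiv (monom (1::'a) (2 ^ r - 1)) = monom 1 (2 ^ r - 2)"
    using assms by (simp add: pderiv_monom_1_CHAR_2 del: power_Suc) (simp add: numeral_2_eq_2)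
  ultimately show ?thesis
    by (simp add: L1_closed_form_def pderiv_add pderiv_mult)
qed

lemma monom_2_mult_pderiv_L1_closed_form:
  assumes "CHAR('a::idom) = 2" and "r \<ge> 1"
  shows "monom 1 2 * pderiv (L1_closed_form r l :: 'a poly) = trP r ^ 2 + trP l ^ 2 ^ r * trP (r - 1) ^ 2"
proof -
  obtain s where r: "r = Suc s"
    using assms(2) by (cases r) auto
  have monom_2_mult: "monom (1::'a) 2 * monom 1 (2 ^ k - 2) = monom 1 (2 ^ k)" if "k \<ge> 1" for k
  proof -
    have "(2::nat) \<le> 2 ^ k"
      using that by (metis power_increasing power_one_right zero_less_numeral one_le_numeral)
    then show ?thesis
      by (metis mult_monom mult_1 le_add_diff_inverse)
  qed
  have low: "monom 1 2 * (\<Sum>k<s. monom 1 (2 ^ Suc k - 2)) = (trP s :: 'a poly) ^ 2"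
    using trP_power_2_power[OF assms(1), of s 1] by (simp add: sum_distrib_left monom_2_mult del: power_Suc)
  have square: "(trP r :: 'a poly) ^ 2 = trP s ^ 2 + monom 1 (2 ^ r)"
    using trP_power_2_power[OF assms(1), of r 1] trP_power_2_power[OF assms(1), of s 1] by (simp add: r)
  have high: "(trP l :: 'a poly) ^ 2 ^ r = (\<Sum>k = r..<r + l. monom 1 (2 ^ k))"
    by (simp add: trP_power_2_power[OF assms(1)] sum.atLeastLessThan_shift_0 atLeast0LessThan add.commute)
  have "monom 1 2 * pderiv (L1_closed_form r l :: 'a poly) = monom 1 2 * monom 1 (2 ^ r - 2) +
      (1 + (\<Sum>k = r..<r + l. monom 1 (2 ^ k))) * (monom 1 2 * (\<Sum>k<s. monom 1 (2 ^ Suc k - 2)))"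
    unfolding pderiv_L1_closed_form[OF assms(1) r] by (simp only: distrib_left mult.left_commute)
  also have "\<dots> = monom 1 (2 ^ r) + (1 + trP l ^ 2 ^ r) * trP s ^ 2"
    by (simp only: monom_2_mult[OF assms(2)] low high)
  also have "\<dots> = trP r ^ 2 + trP l ^ 2 ^ r * trP (r - 1) ^ 2"
    unfolding square by (simp add: r algebra_simps del: power_Suc)
  finally show ?thesis .
qed

lemma poly_pderiv_L1_closed_form_0:
  assumes "CHAR('a::idom) = 2" and "r \<ge> 2"
  shows "poly (pderiv (L1_closed_form r l :: 'a poly)) 0 = 1"
proof -
  obtain s where r: "r = Suc (Suc s)"
    using assms(2) by (metis add_2_eq_Suc le_Suc_ex)
  have two_less: "(2::nat) < 2 ^ Suc (Suc k)" for k
    using power_strict_increasing[of 1 "Suc (Suc k)" "2::nat"] by simp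
  have "(\<Sum>k<Suc s. poly (monom (1::'a) (2 ^ Suc k - 2)) 0) = 1"
    unfolding sum.lessThan_Suc_shift
    by (simp add: poly_monom power_0_left not_le[THEN iffD2, OF two_less] del: power_Suc)
  moreover have "\<not> (2::nat) ^ r \<le> 2"
    using two_less[of s] by (simp add: r del: power_Suc)
  ultimately show ?thesis
    by (simp add: pderiv_L1_closed_form[OF assms(1) r] poly_sum poly_monom power_0_left del: power_Suc)
qed

lemma poly_to_ac_pderiv_L1:
  assumes "r \<ge> 1"
  shows "t ^ 2 * poly (map_poly to_ac (pderiv (L1 (2 ^ r * (2 ^ l + 1))))) t =
    poly (trP r) t ^ 2 + poly (trP l) t ^ 2 ^ r * poly (trP (r - 1)) t ^ 2"
proof -
  have "monom 1 2 * pderiv (L1 (2 ^ r * (2 ^ l + 1))) =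
      (trP r ^ 2 + trP l ^ 2 ^ r * trP (r - 1) ^ 2 :: bit poly)"
    unfolding L1_eq_closed_form[OF assms]
    by (rule monom_2_mult_pderiv_L1_closed_form[OF CHAR_bit assms])
  from arg_cong[where f = "map_poly to_ac", OF this]
  have "monom 1 2 * map_poly to_ac (pderiv (L1 (2 ^ r * (2 ^ l + 1)))) =
      (trP r ^ 2 + trP l ^ 2 ^ r * trP (r - 1) ^ 2 :: bit alg_closure poly)"
    by (simp add: map_poly_to_ac_add map_poly_to_ac_mult map_poly_to_ac_power map_poly_to_ac_trP
        map_poly_monom)
  from arg_cong[where f = "\<lambda>p. poly p t", OF this] show ?thesis
    by (simp add: poly_monom)
qed

lemma eq_divide_of_square_sum_eq_0_CHAR_2:
  fixes a b c :: "'a::field"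
  assumes "CHAR('a) = 2" and "a ^ 2 + c ^ 2 * b ^ 2 = 0" and "b \<noteq> 0"
  shows "c = a / b"
proof -
  have "(a / b) ^ 2 = c ^ 2"
    using assms by (simp add: add_eq_0_iff_eq_CHAR_2 power_divide)
  then show ?thesis
    using power_2_power_eq_iff_CHAR_2[OF assms(1), of "a / b" 1 c] by simp
qed

lemma trP_Suc_ratio_add:
  fixes x y q :: "'a::field"
  assumes "CHAR('a) = 2" and "x \<noteq> y"
    and "poly (trP (Suc s)) x = q * poly (trP s) x" and "poly (trP (Suc s)) y = q * poly (trP s) y"
  shows "poly (trP s) (x + y) \<noteq> 0" and "poly (trP (Suc s)) (x + y) / poly (trP s) (x + y) = q"
proof -
  have "poly (trP (Suc s)) (x + y) = poly (trP (Suc s)) x + poly (trP (Suc s)) y"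
    by (rule poly_trP_add[OF assms(1)])
  also have "\<dots> = q * poly (trP s) (x + y)"
    by (simp only: assms(3,4) poly_trP_add[OF assms(1)] distrib_left)
  finally have sum: "poly (trP (Suc s)) (x + y) = q * poly (trP s) (x + y)" .
  show nonzero: "poly (trP s) (x + y) \<noteq> 0"
  proof
    assume "poly (trP s) (x + y) = 0"
    with sum show False
      using poly_trP_consecutive_zeros[of s "x + y"] assms(1,2) by (simp add: add_eq_0_iff_eq_CHAR_2)
  qed
  from sum nonzero show "poly (trP (Suc s)) (x + y) / poly (trP s) (x + y) = q"
    by simp
qed

lemma pderiv_L1_root_trP_ratio:
  fixes t :: "bit alg_closure"
  assumes "r \<ge> 2" and "poly (map_poly to_ac (pderiv (L1 (2 ^ r * (2 ^ l + 1))))) t = 0"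
  shows "poly (trP (r - 1)) t \<noteq> 0"
    and "poly (trP l) t ^ 2 ^ (r - 1) = poly (trP r) t / poly (trP (r - 1)) t"
proof -
  obtain s where r: "r = Suc s"
    using assms(1) by (cases r) auto
  have char: "CHAR(bit alg_closure) = 2"
    by simp
  have rs: "r - 1 = s"
    by (simp add: r)
  have pow: "poly (trP l) t ^ 2 ^ r = (poly (trP l) t ^ 2 ^ s) ^ 2"
    by (simp add: r mult.commute flip: power_mult)
  have "t ^ 2 * poly (map_poly to_ac (pderiv (L1 (2 ^ r * (2 ^ l + 1))))) t =
      poly (trP r) t ^ 2 + poly (trP l) t ^ 2 ^ r * poly (trP (r - 1)) t ^ 2"
    using assms(1) by (intro poly_to_ac_pderiv_L1) simp
  then have root_eq: "poly (trP r) t ^ 2 + (poly (trP l) t ^ 2 ^ s) ^ 2 * poly (trP s) t ^ 2 = 0"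
    unfolding pow rs assms(2) by simp
  show nonzero: "poly (trP (r - 1)) t \<noteq> 0"
  proof
    assume "poly (trP (r - 1)) t = 0"
    then have "poly (trP s) t = 0" "poly (trP (Suc s)) t = 0"
      using root_eq by (simp_all add: r)
    then have "t = 0"
      by (rule poly_trP_consecutive_zeros)
    moreover have "poly (map_poly to_ac (pderiv (L1 (2 ^ r * (2 ^ l + 1))))) 0 = (1 :: bit alg_closure)"
      using poly_pderiv_L1_closed_form_0[OF CHAR_bit assms(1), of l] L1_eq_closed_form[of r l] assms(1)
      by (simp add: poly_0_coeff_0 coeff_map_poly)
    ultimately show False
      using assms(2) by simp
  qed
  from nonzero have "poly (trP s) t \<noteq> 0"
    by (simp add: r)
  from eq_divide_of_square_sum_eq_0_CHAR_2[OF char root_eq this]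
  show "poly (trP l) t ^ 2 ^ (r - 1) = poly (trP r) t / poly (trP (r - 1)) t"
    by (simp only: r diff_Suc_1)
qed
lemma pderiv_L1_roots_sum_trP_ratio:
  fixes ti tj :: "bit alg_closure"
  assumes "r \<ge> 2"
    and roots: "poly (map_poly to_ac (pderiv (L1 (2 ^ r * (2 ^ l + 1))))) ti = 0"
      "poly (map_poly to_ac (pderiv (L1 (2 ^ r * (2 ^ l + 1))))) tj = 0"
    and "ti \<noteq> tj" and "poly (trP l) (ti + tj) = 0"
  shows "poly (trP l) tj = poly (trP l) ti"
    and "poly (trP (r - 1)) (ti + tj) \<noteq> 0"
    and "poly (trP r) (ti + tj) / poly (trP (r - 1)) (ti + tj) = poly (trP l) ti ^ 2 ^ (r - 1)"
proof -
  have r: "Suc (r - 1) = r"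
    using assms(1) by simp
  show same: "poly (trP l) tj = poly (trP l) ti"
    using assms(5) by (simp add: poly_trP_add add_eq_0_iff_eq_CHAR_2)
  have "poly (trP r) t = poly (trP l) ti ^ 2 ^ (r - 1) * poly (trP (r - 1)) t" if "t \<in> {ti, tj}" for t
    using pderiv_L1_root_trP_ratio[OF assms(1), of l t] that roots same by (auto simp: field_simps)
  then have "poly (trP r) ti = poly (trP l) ti ^ 2 ^ (r - 1) * poly (trP (r - 1)) ti"
    "poly (trP r) tj = poly (trP l) ti ^ 2 ^ (r - 1) * poly (trP (r - 1)) tj"
    by simp_all
  from trP_Suc_ratio_add[where s = "r - 1", unfolded r, OF _ assms(4) this]
  show "poly (trP (r - 1)) (ti + tj) \<noteq> 0"
    and "poly (trP r) (ti + tj) / poly (trP (r - 1)) (ti + tj) = poly (trP l) ti ^ 2 ^ (r - 1)"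
    by simp_all
qed

theorem lemma3p3:
  fixes r l m :: nat
  assumes "r \<ge> 2" and "l \<ge> 1" and "m = 2 ^ r * (2 ^ l + 1)"
  shows
    "L1 m = monom 1 (2 ^ r - 1) +
       (1 + (\<Sum>k\<in>{r..<r + l}. monom 1 (2 ^ k))) * (\<Sum>k<r. monom 1 (2 ^ k - 1))
   \<and>
    monom 1 2 * pderiv (L1 m) = trP r ^ 2 + trP l ^ (2 ^ r) * trP (r - 1) ^ 2
   \<and>
    (\<forall>\<tau> :: bit alg_closure. poly (map_poly to_ac (pderiv (L1 m))) \<tau> = 0 \<longrightarrow>
       poly (trP (r - 1)) \<tau> \<noteq> 0)
   \<and>
    (\<forall>\<tau>i \<tau>j :: bit alg_closure.
       poly (map_poly to_ac (pderiv (L1 m))) \<tau>i = 0 \<longrightarrow>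
       poly (map_poly to_ac (pderiv (L1 m))) \<tau>j = 0 \<longrightarrow>
       \<tau>i \<noteq> \<tau>j \<longrightarrow> poly (trP l) (\<tau>i + \<tau>j) = 0 \<longrightarrow>
       poly (trP (r - 1)) (\<tau>i + \<tau>j) \<noteq> 0 \<and>
       poly (trP l) \<tau>i ^ (2 ^ (r - 1)) = poly (trP r) \<tau>i / poly (trP (r - 1)) \<tau>i \<and>
       poly (trP r) \<tau>i / poly (trP (r - 1)) \<tau>i =
         poly (trP r) (\<tau>i + \<tau>j) / poly (trP (r - 1)) (\<tau>i + \<tau>j) \<and>
       poly (trP r) (\<tau>i + \<tau>j) / poly (trP (r - 1)) (\<tau>i + \<tau>j) =
         poly (trP r) \<tau>j / poly (trP (r - 1)) \<tau>j \<and>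
       poly (trP r) \<tau>j / poly (trP (r - 1)) \<tau>j = poly (trP l) \<tau>j ^ (2 ^ (r - 1)))"
proof -
  have "r \<ge> 1"
    using assms(1) by simp
  have L1: "L1 m = L1_closed_form r l"
    unfolding assms(3) using \<open>r \<ge> 1\<close> by (rule L1_eq_closed_form)
  then have i: "L1 m = monom 1 (2 ^ r - 1) +
      (1 + (\<Sum>k\<in>{r..<r + l}. monom 1 (2 ^ k))) * (\<Sum>k<r. monom 1 (2 ^ k - 1))"
    by (simp only: L1_closed_form_def)
  have ii: "monom 1 2 * pderiv (L1 m) = trP r ^ 2 + trP l ^ 2 ^ r * trP (r - 1) ^ 2"
    unfolding L1 using CHAR_bit \<open>r \<ge> 1\<close> by (rule monom_2_mult_pderiv_L1_closed_form)
  note root = pderiv_L1_root_trP_ratio[OF assms(1), where l = l, folded assms(3)]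
  note roots_sum = pderiv_L1_roots_sum_trP_ratio[OF assms(1), where l = l, folded assms(3)]
  show ?thesis
    by (intro conjI i ii allI impI) (metis root roots_sum)+
qed

end
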